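(* Let $(y_i',x_i')'$, $1\le i\le n$, be an i.i.d. sample from the multivariate linear model $y_i=B_0'x_i+u_i$ with random $x_i\in\mathbb{R}^p$, errors $u_i\in\mathbb{R}^q$ independent of $x_i$ with distribution $F_0$ and scatter matrix $\Sigma_0\in\mathcal{S}_q$, and write $\Sigma_0=|\Sigma_0|^{1/q}\Gamma_0$. Let $\rho_0$ be a $\rho$-function. Assume the initial estimates satisfy $\tilde B_n\to B_0$ and $\tilde\Sigma_n\to\Gamma_0$ almost surely. Then $\hat\sigma_n=s\big(d_1(\tilde B_n,\tilde\Sigma_n),\dots,d_n(\tilde B_n,\tilde\Sigma_n)\big)$ converges almost surely to $\sigma_0$, defined by $E_{F_0}\rho_0\big((u'\Gamma_0^{-1}u)^{1/2}/\sigma_0\big)=0.5$.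
   Context: $\mathcal{S}_q$ is the set of positive definite symmetric $q\times q$ matrices, $|\cdot|$ the determinant. A $\rho$-function is a continuous nondecreasing function of $|u|$ with $\rho(0)=0$, $\sup\rho=1$, strictly increasing on nonnegative $u$ with $\rho(u)<1$. $d_i(B,\Sigma)=((y_i-B'x_i)'\Sigma^{-1}(y_i-B'x_i))^{1/2}$. The M-scale $s(v)$ of $v=(v_1,\dots,v_n)$ solves $\frac1n\sum_i\rho_0(v_i/s)=0.5$ (or $s=0$ if at least half the $v_i$ are zero). *)

theory Defs
  imports "HOL-Probability.Probability"
begin

definition pd_sym :: "real^'q^'q \<Rightarrow> bool" where
  "pd_sym S \<longleftrightarrow> transpose S = S \<and> (\<forall>v. v \<noteq> 0 \<longrightarrow> v \<bullet> (S *v v) > 0)"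

definition rho_function :: "(real \<Rightarrow> real) \<Rightarrow> bool" where
  "rho_function \<rho> \<longleftrightarrow>
     continuous_on UNIV \<rho> \<and>
     (\<forall>u. \<rho> u = \<rho> \<bar>u\<bar>) \<and>
     mono_on {0..} \<rho> \<and>
     \<rho> 0 = 0 \<and>
     bdd_above (range \<rho>) \<and> (SUP u. \<rho> u) = 1 \<and>
     (\<forall>u v. 0 \<le> u \<and> u < v \<and> \<rho> u < 1 \<longrightarrow> \<rho> u < \<rho> v)"

definition mdist :: "real^'q^'p \<Rightarrow> real^'q^'q \<Rightarrow> real^'q \<Rightarrow> real^'p \<Rightarrow> real" where
  "mdist B \<Sigma> y x = sqrt ((y - transpose B *v x) \<bullet> (matrix_inv \<Sigma> *v (y - transpose B *v x)))"

definition mscale :: "(real \<Rightarrow> real) \<Rightarrow> nat \<Rightarrow> (nat \<Rightarrow> real) \<Rightarrow> real" where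
  "mscale \<rho> n v =
     (if real n \<le> 2 * real (card {i\<in>{..<n}. v i = 0}) then 0
      else (THE s. s > 0 \<and> (1 / real n) * (\<Sum>i<n. \<rho> (v i / s)) = 1/2))"

end

theory Submission
  imports Defs
begin

(*
  Almost surely, the initial estimates converge, the strong law of large numbers applies to the
  averages of rho0(d_i(B0, Gamma0) / sigma) for the countably many scales sigma = sigma0 +- t_m with
  t_m -> 0, and the empirical frequencies of large (x_i, u_i) converge to the tail probabilities.
  The squared distances d_i^2 computed from (B, Sigma) differ from those computed from (B0, Gamma0)
  by a quantity that tends to 0 uniformly on bounded sets as (B, Sigma) -> (B0, Gamma0); since
  rho0 composed with the square root is uniformly continuous and the tail frequencies are small,
  the perturbed averages have the same limits. The population average is antitone in sigma with
  the unique root sigma0 of the level 1/2, hence lies strictly above 1/2 at sigma0 - t_m and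
  strictly below at sigma0 + t_m; the same then holds eventually for the sample averages, which
  traps the M-scale in (sigma0 - t_m, sigma0 + t_m).
*)

section \<open>Matrix estimates\<close>

lemma norm_matrix_vector_mult_le:
  fixes A :: "real^'n^'m"
  shows "norm (A *v x) \<le> norm A * norm x"
proof -
  have "norm (A *v x) = L2_set (\<lambda>i. \<bar>A $ i \<bullet> x\<bar>) UNIV"
    by (simp add: norm_vec_def matrix_mult_dot)
  also have "\<dots> \<le> L2_set (\<lambda>i. norm (A $ i) * norm x) UNIV"
    by (rule L2_set_mono) (auto simp: Cauchy_Schwarz_ineq2)
  also have "\<dots> = norm A * norm x"
    by (simp add: L2_set_left_distrib norm_vec_def)
  finally show ?thesis .
qed

lemma tendsto_transpose:
  fixes A :: "'b \<Rightarrow> real^'n^'m"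
  assumes "(A \<longlongrightarrow> A0) F"
  shows "((\<lambda>t. transpose (A t)) \<longlongrightarrow> transpose A0) F"
  by (intro vec_tendstoI) (simp add: transpose_def tendsto_vec_nth assms)

lemma matrix_inv_mult_vector:
  fixes S :: "real^'n^'n"
  assumes "invertible S"
  shows "S *v (matrix_inv S *v w) = w" "matrix_inv S *v (S *v w) = w"
proof -
  have "\<exists>S'. S ** S' = mat 1 \<and> S' ** S = mat 1"
    using assms unfolding invertible_def by blast
  from someI_ex[OF this] have "S ** matrix_inv S = mat 1" "matrix_inv S ** S = mat 1"
    unfolding matrix_inv_def by auto
  then show "S *v (matrix_inv S *v w) = w" "matrix_inv S *v (S *v w) = w"
    by (metis matrix_vector_mul_assoc matrix_vector_mul_lid)+
qed

lemma norm_le_near_invertible: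
  fixes S0 S :: "real^'n^'n"
  assumes inv: "invertible S0" and near: "2 * norm (matrix_inv S0) * norm (S - S0) \<le> 1"
  shows "norm v \<le> 2 * norm (matrix_inv S0) * norm (S *v v)"
proof -
  define c where "c = norm (matrix_inv S0)"
  have "norm v = norm (matrix_inv S0 *v (S *v v - (S - S0) *v v))"
    using matrix_inv_mult_vector(2)[OF inv] by (simp add: matrix_vector_mult_diff_rdistrib)
  also have "\<dots> \<le> c * (norm (S *v v) + norm (S - S0) * norm v)"
    unfolding c_def
    by (intro order.trans[OF norm_matrix_vector_mult_le] mult_left_mono
        order.trans[OF norm_triangle_ineq4] add_left_mono norm_matrix_vector_mult_le) auto
  also have "\<dots> \<le> c * norm (S *v v) + norm v / 2"
    using near mult_right_mono[OF near, of "norm v"] by (simp add: c_def algebra_simps)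
  finally show ?thesis by (simp add: c_def)
qed

lemma invertible_near_invertible:
  fixes S0 S :: "real^'n^'n"
  assumes "invertible S0" and "2 * norm (matrix_inv S0) * norm (S - S0) \<le> 1"
  shows "invertible S"
  unfolding invertible_left_inverse matrix_left_invertible_ker
  using norm_le_near_invertible[OF assms] by (metis mult_zero_right norm_le_zero_iff norm_zero)

lemma pd_sym_invertible:
  assumes "pd_sym (S :: real^'n^'n)"
  shows "invertible S"
  unfolding invertible_left_inverse matrix_left_invertible_ker
  using assms unfolding pd_sym_def by (metis inner_zero_right less_irrefl)

lemma pd_sym_scaled_invertible:
  assumes "pd_sym (S :: real^'n^'n)"
  shows "invertible ((1 / det S powr a) *\<^sub>R S)"
proof -
  have "det S \<noteq> 0"
    using pd_sym_invertible[OF assms] by (simp add: invertible_det_nz)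
  then show ?thesis
    by (intro scalar_invertible pd_sym_invertible[OF assms]) simp
qed

definition quad_form :: "real^'n^'n \<Rightarrow> real^'n \<Rightarrow> real" where
  "quad_form A w = w \<bullet> (A *v w)"

lemma mdist_linear_model:
  fixes B B0 :: "real^'q^'p" and x :: "real^'p" and u :: "real^'q"
  shows "mdist B S (transpose B0 *v x + u) x = sqrt (quad_form (matrix_inv S) (u + transpose (B0 - B) *v x))"
proof -
  have "transpose B0 *v x + u - transpose B *v x = u + transpose (B0 - B) *v x"
    by (simp add: vec_eq_iff vector_matrix_mult_def sum_subtractf algebra_simps)
  then show ?thesis
    unfolding mdist_def quad_form_def by (simp only:)
qed

lemma quad_form_inverse_perturbation:
  fixes S0 S :: "real^'n^'n"
  defines "c \<equiv> norm (matrix_inv S0)"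
  assumes inv: "invertible S0" and near: "2 * c * norm (S - S0) \<le> 1"
  shows "\<bar>quad_form (matrix_inv S) (u + d) - quad_form (matrix_inv S0) u\<bar>
           \<le> 2 * c * (norm u + norm d) * (norm d + c * norm (S - S0) * norm u) + c * norm u * norm d"
proof -
  define z0 where "z0 = matrix_inv S0 *v u"
  define z where "z = matrix_inv S *v (u + d)"
  have z0: "norm z0 \<le> c * norm u"
    unfolding z0_def c_def by (rule norm_matrix_vector_mult_le)
  have "S *v (z - z0) = d - (S - S0) *v z0"
    using matrix_inv_mult_vector(1)[OF invertible_near_invertible[OF inv near[unfolded c_def]]]
      matrix_inv_mult_vector(1)[OF inv]
    by (simp add: z_def z0_def matrix_vector_mult_diff_distrib matrix_vector_mult_diff_rdistrib)
  then have "norm (z - z0) \<le> 2 * c * norm (d - (S - S0) *v z0)"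
    using norm_le_near_invertible[OF inv near[unfolded c_def], of "z - z0"] by (simp add: c_def)
  also have "\<dots> \<le> 2 * c * (norm d + c * norm (S - S0) * norm u)"
    using order.trans[OF norm_matrix_vector_mult_le mult_left_mono[OF z0], of "S - S0"]
    by (intro mult_left_mono order.trans[OF norm_triangle_ineq4]) (auto simp: c_def algebra_simps)
  finally have zz0: "norm (z - z0) \<le> 2 * c * (norm d + c * norm (S - S0) * norm u)" .
  have "quad_form (matrix_inv S) (u + d) - quad_form (matrix_inv S0) u = (u + d) \<bullet> (z - z0) + d \<bullet> z0"
    by (simp add: quad_form_def z_def z0_def inner_diff_right inner_add_left)
  also have "\<bar>\<dots>\<bar> \<le> norm (u + d) * norm (z - z0) + norm d * norm z0"
    by (intro order.trans[OF abs_triangle_ineq] add_mono Cauchy_Schwarz_ineq2)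
  also have "\<dots> \<le> (norm u + norm d) * (2 * c * (norm d + c * norm (S - S0) * norm u)) + norm d * (c * norm u)"
    by (intro add_mono mult_mono zz0 z0 norm_triangle_ineq) auto
  finally show ?thesis by (simp add: algebra_simps)
qed

lemma quad_form_inverse_locally_uniform:
  fixes S :: "nat \<Rightarrow> real^'q^'q" and B :: "nat \<Rightarrow> real^'q^'p"
  assumes inv: "invertible S0" and S: "S \<longlonglongrightarrow> S0" and B: "B \<longlonglongrightarrow> B0" and e: "e > 0"
  shows "\<forall>\<^sub>F n in sequentially. \<forall>x u. norm x \<le> K \<longrightarrow> norm u \<le> K \<longrightarrow>
           \<bar>quad_form (matrix_inv (S n)) (u + transpose (B0 - B n) *v x) - quad_form (matrix_inv S0) u\<bar> < e"
proof -
  define c where "c = norm (matrix_inv S0)"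
  define \<delta> where "\<delta> n = norm (S n - S0)" for n
  define \<epsilon> where "\<epsilon> n = norm (transpose (B0 - B n))" for n
  define \<beta> where "\<beta> n = 2 * c * (K + \<epsilon> n * K) * (\<epsilon> n * K + c * \<delta> n * K) + c * K * (\<epsilon> n * K)" for n
  have "\<delta> \<longlonglongrightarrow> 0"
    unfolding \<delta>_def using S by (intro tendsto_norm_zero) (simp add: LIM_zero)
  moreover have "\<epsilon> \<longlonglongrightarrow> 0"
    unfolding \<epsilon>_def using tendsto_transpose[OF tendsto_diff[OF tendsto_const B], of B0]
    by (intro tendsto_norm_zero) (simp add: transpose_def vec_eq_iff zero_vec_def)
  ultimately have "\<beta> \<longlonglongrightarrow> 0" and "(\<lambda>n. 2 * c * \<delta> n) \<longlonglongrightarrow> 0"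
    unfolding \<beta>_def by (auto intro!: tendsto_eq_intros)
  from order_tendstoD(2)[OF this(1) e] order_tendstoD(2)[OF this(2) zero_less_one]
  have "\<forall>\<^sub>F n in sequentially. \<beta> n < e \<and> 2 * c * \<delta> n \<le> 1"
    by eventually_elim simp
  then show ?thesis
  proof eventually_elim
    case (elim n)
    show ?case
    proof (intro allI impI)
      fix x :: "real^'p" and u :: "real^'q"
      assume x: "norm x \<le> K" and u: "norm u \<le> K"
      have d: "norm (transpose (B0 - B n) *v x) \<le> \<epsilon> n * K"
        unfolding \<epsilon>_def by (rule order.trans[OF norm_matrix_vector_mult_le mult_left_mono[OF x]]) simp
      have "\<bar>quad_form (matrix_inv (S n)) (u + transpose (B0 - B n) *v x) - quad_form (matrix_inv S0) u\<bar>
          \<le> 2 * c * (norm u + norm (transpose (B0 - B n) *v x)) * (norm (transpose (B0 - B n) *v x) + c * \<delta> n * norm u)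
            + c * norm u * norm (transpose (B0 - B n) *v x)"
        using quad_form_inverse_perturbation[OF inv] elim unfolding c_def \<delta>_def by blast
      also have "\<dots> \<le> \<beta> n"
        unfolding \<beta>_def using u d order.trans[OF norm_ge_zero u]
        by (intro add_mono mult_mono mult_left_mono) (auto simp: c_def \<delta>_def \<epsilon>_def)
      finally have "\<bar>quad_form (matrix_inv (S n)) (u + transpose (B0 - B n) *v x) - quad_form (matrix_inv S0) u\<bar> \<le> \<beta> n" .
      with elim show "\<bar>quad_form (matrix_inv (S n)) (u + transpose (B0 - B n) *v x) - quad_form (matrix_inv S0) u\<bar> < e"
        by linarith
    qed
  qed
qed

section \<open>Rho-functions\<close>

lemma rho_function_even: "rho_function \<rho> \<Longrightarrow> \<rho> u = \<rho> \<bar>u\<bar>"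
  unfolding rho_function_def by blast

lemma rho_function_zero: "rho_function \<rho> \<Longrightarrow> \<rho> 0 = 0"
  unfolding rho_function_def by blast

lemma rho_function_continuous: "rho_function \<rho> \<Longrightarrow> continuous_on UNIV \<rho>"
  unfolding rho_function_def by blast

lemma rho_function_mono: "rho_function \<rho> \<Longrightarrow> 0 \<le> a \<Longrightarrow> a \<le> b \<Longrightarrow> \<rho> a \<le> \<rho> b"
  unfolding rho_function_def by (meson atLeast_iff mono_onD order.trans)

lemma rho_function_strict_mono:
  "rho_function \<rho> \<Longrightarrow> 0 \<le> a \<Longrightarrow> a < b \<Longrightarrow> \<rho> a < 1 \<Longrightarrow> \<rho> a < \<rho> b"
  unfolding rho_function_def by blast

lemma rho_function_SUP:
  assumes "rho_function \<rho>"
  shows "bdd_above (range \<rho>)" "(SUP u. \<rho> u) = 1"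
  using assms unfolding rho_function_def by meson+

lemma rho_function_bounds:
  assumes "rho_function \<rho>"
  shows "0 \<le> \<rho> u" "\<rho> u \<le> 1"
proof -
  have "\<rho> 0 \<le> \<rho> \<bar>u\<bar>"
    by (rule rho_function_mono[OF assms]) auto
  then show "0 \<le> \<rho> u"
    using rho_function_even[OF assms, of u] rho_function_zero[OF assms] by linarith
  show "\<rho> u \<le> 1"
    using cSUP_upper[of u UNIV \<rho>] rho_function_SUP[OF assms] by simp
qed

lemma rho_function_scale_antimono:
  assumes "rho_function \<rho>" and "0 < a" "a \<le> b"
  shows "\<rho> (v / b) \<le> \<rho> (v / a)"
proof -
  have "\<rho> (\<bar>v\<bar> / b) \<le> \<rho> (\<bar>v\<bar> / a)"
    using assms(2,3) by (intro rho_function_mono[OF assms(1)] divide_left_mono) auto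
  then show ?thesis
    using assms rho_function_even[OF assms(1), of "v / a"] rho_function_even[OF assms(1), of "v / b"]
    by (simp add: abs_divide)
qed

text \<open>Near the supremum 1 the function is flat up to \<open>\<eta>\<close>, and on the remaining compact interval it is
  uniformly continuous.\<close>
lemma rho_function_uniformly_continuous:
  assumes rho: "rho_function \<rho>"
  shows "uniformly_continuous_on UNIV \<rho>"
proof -
  have "\<exists>d>0. \<forall>a b. \<bar>a - b\<bar> < d \<longrightarrow> \<bar>\<rho> a - \<rho> b\<bar> < \<eta>" if \<eta>: "\<eta> > 0" for \<eta>
  proof -
    have "\<exists>u. 1 - \<eta> < \<rho> u"
      using less_cSUP_iff[of UNIV \<rho> "1 - \<eta>"] rho_function_SUP[OF rho] \<eta> by auto
    then obtain T where T: "0 \<le> T" "1 - \<eta> < \<rho> T"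
      using rho_function_even[OF rho] by (metis abs_ge_zero)
    have flat: "\<bar>\<rho> a - \<rho> b\<bar> < \<eta>" if "T \<le> \<bar>a\<bar>" "T \<le> \<bar>b\<bar>" for a b
      using rho_function_mono[OF rho T(1) that(1)] rho_function_mono[OF rho T(1) that(2)]
        rho_function_even[OF rho, of a] rho_function_even[OF rho, of b]
        rho_function_bounds[OF rho, of a] rho_function_bounds[OF rho, of b] T(2)
      by linarith
    have "uniformly_continuous_on {-(T+1)..T+1} \<rho>"
      by (intro compact_uniformly_continuous continuous_on_subset[OF rho_function_continuous[OF rho]]) auto
    then obtain d where d: "d > 0"
      "\<And>a b. a \<in> {-(T+1)..T+1} \<Longrightarrow> b \<in> {-(T+1)..T+1} \<Longrightarrow> \<bar>a - b\<bar> < d \<Longrightarrow> \<bar>\<rho> a - \<rho> b\<bar> < \<eta>"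
      unfolding uniformly_continuous_on_def dist_real_def using \<eta> by metis
    have "\<bar>\<rho> a - \<rho> b\<bar> < \<eta>" if ab: "\<bar>a - b\<bar> < min d 1" for a b
    proof (cases "\<bar>a\<bar> \<le> T + 1 \<and> \<bar>b\<bar> \<le> T + 1")
      case True
      then show ?thesis using d(2)[of a b] ab by (auto simp: abs_le_iff)
    next
      case False
      then show ?thesis using flat[of a b] ab by (auto simp: abs_le_iff abs_less_iff)
    qed
    then show ?thesis
      using d(1) by (intro exI[of _ "min d 1"]) auto
  qed
  then show ?thesis
    unfolding uniformly_continuous_on_def dist_real_def by metis
qed

text \<open>The square root is extended to negative arguments as an odd function, and the quadratic forms
  of perturbed inverse matrices need not be nonnegative, so the bound is needed on the whole line.\<close>
lemma sqrt_diff_le_ordered: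
  fixes a b :: real
  assumes "b \<le> a"
  shows "sqrt a - sqrt b \<le> 2 * sqrt (a - b)"
proof -
  consider "0 \<le> b" | "a \<le> 0" | "b < 0" "0 < a" by linarith
  then show ?thesis
  proof cases
    case 1
    then have "sqrt a \<le> sqrt b + sqrt (a - b)"
      using sqrt_add_le_add_sqrt[of b "a - b"] assms by simp
    moreover have "0 \<le> sqrt (a - b)"
      using assms by simp
    ultimately show ?thesis by linarith
  next
    case 2
    then have "sqrt (- b) \<le> sqrt (- a) + sqrt (a - b)"
      using sqrt_add_le_add_sqrt[of "-a" "a - b"] assms by simp
    then have "sqrt a - sqrt b \<le> sqrt (a - b)"
      by (simp add: real_sqrt_minus)
    moreover have "0 \<le> sqrt (a - b)"
      using assms by simp
    ultimately show ?thesis by linarith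
  next
    case 3
    have "sqrt a \<le> sqrt (a - b)" "sqrt (- b) \<le> sqrt (a - b)"
      using 3 by (simp_all only: real_sqrt_le_iff)
    then show ?thesis
      using real_sqrt_minus[of b] by linarith
  qed
qed

lemma uniformly_continuous_on_sqrt: "uniformly_continuous_on UNIV sqrt"
proof -
  have diff: "\<bar>sqrt a - sqrt b\<bar> \<le> 2 * sqrt \<bar>a - b\<bar>" for a b
    using sqrt_diff_le_ordered[of a b] sqrt_diff_le_ordered[of b a] by (cases "b \<le> a") auto
  have "\<bar>sqrt a - sqrt b\<bar> < \<eta>" if "\<eta> > 0" "\<bar>a - b\<bar> < (\<eta> / 2)\<^sup>2" for a b \<eta>
    using diff[of a b] real_sqrt_less_mono[OF that(2)] that(1) by simp
  then show ?thesis
    unfolding uniformly_continuous_on_def dist_real_def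
    by (metis zero_less_divide_iff zero_less_numeral zero_less_power)
qed

lemma rho_function_sqrt_uniformly_continuous:
  assumes "rho_function \<rho>"
  shows "uniformly_continuous_on UNIV (\<lambda>q. \<rho> (sqrt q / s))"
proof -
  have "uniformly_continuous_on UNIV (\<lambda>q. sqrt q * inverse s)"
    by (intro uniformly_continuous_on_cmul_right uniformly_continuous_on_sqrt)
  moreover have "uniformly_continuous_on (range (\<lambda>q. sqrt q * inverse s)) \<rho>"
    using rho_function_uniformly_continuous[OF assms] unfolding uniformly_continuous_on_def by (meson UNIV_I)
  ultimately have "uniformly_continuous_on UNIV (\<lambda>q. \<rho> (sqrt q * inverse s))"
    by (rule uniformly_continuous_on_compose)
  then show ?thesis
    by (simp add: divide_inverse)
qed

section \<open>Averages and the M-scale\<close>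

lemma average_tendsto_of_locally_uniform:
  fixes z :: "nat \<Rightarrow> 'b::real_normed_vector" and f :: "nat \<Rightarrow> 'b \<Rightarrow> real" and f0 :: "'b \<Rightarrow> real"
  assumes bounded: "\<And>n w. f n w \<in> {0..1}" "\<And>w. f0 w \<in> {0..1}"
    and unif: "\<And>K e. e > 0 \<Longrightarrow> \<forall>\<^sub>F n in sequentially. \<forall>w. norm w \<le> K \<longrightarrow> \<bar>f n w - f0 w\<bar> < e"
    and lim: "(\<lambda>n. (\<Sum>i<n. f0 (z i)) / n) \<longlonglongrightarrow> g"
    and tail: "\<And>k. (\<lambda>n. (\<Sum>i<n. of_bool (real k < norm (z i))) / n) \<longlonglongrightarrow> p k"
    and tail_0: "p \<longlonglongrightarrow> 0"
  shows "(\<lambda>n. (\<Sum>i<n. f n (z i)) / n) \<longlonglongrightarrow> g"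
proof (rule tendstoI)
  fix e :: real assume "e > 0"
  define \<eta> where "\<eta> = e / 4"
  have \<eta>: "\<eta> > 0" using \<open>e > 0\<close> by (simp add: \<eta>_def)
  obtain k where k: "\<bar>p k\<bar> < \<eta>"
    using eventually_happens'[OF _ tendstoD[OF tail_0 \<eta>]] by (auto simp: dist_real_def)
  define T where "T n = (\<Sum>i<n. of_bool (real k < norm (z i)) :: real) / n" for n
  have "\<forall>\<^sub>F n in sequentially. (\<forall>w. norm w \<le> real k \<longrightarrow> \<bar>f n w - f0 w\<bar> < \<eta>)
           \<and> \<bar>T n - p k\<bar> < \<eta> \<and> \<bar>(\<Sum>i<n. f0 (z i)) / n - g\<bar> < \<eta> \<and> n > 0"
    using unif[OF \<eta>] tendstoD[OF tail \<eta>] tendstoD[OF lim \<eta>] eventually_gt_at_top[of 0]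
    by eventually_elim (simp add: T_def dist_real_def)
  then show "\<forall>\<^sub>F n in sequentially. dist ((\<Sum>i<n. f n (z i)) / n) g < e"
  proof eventually_elim
    case (elim n)
    have pointwise: "\<bar>f n w - f0 w\<bar> \<le> of_bool (real k < norm w) + \<eta>" for w
      using elim bounded(1)[of n w] bounded(2)[of w] \<eta>
      by (cases "real k < norm w") (auto simp: not_less less_imp_le abs_le_iff)
    have "\<bar>(\<Sum>i<n. f n (z i)) / n - (\<Sum>i<n. f0 (z i)) / n\<bar> = \<bar>\<Sum>i<n. f n (z i) - f0 (z i)\<bar> / n"
      by (simp add: sum_subtractf diff_divide_distrib[symmetric])
    also have "\<dots> \<le> (\<Sum>i<n. of_bool (real k < norm (z i)) + \<eta>) / n"
      by (intro divide_right_mono order.trans[OF sum_abs] sum_mono pointwise) auto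
    also have "\<dots> = T n + \<eta>"
      using elim by (simp add: T_def sum.distrib add_divide_distrib)
    finally show ?case
      using elim k unfolding dist_real_def \<eta>_def by linarith
  qed
qed

definition rho_average :: "(real \<Rightarrow> real) \<Rightarrow> nat \<Rightarrow> (nat \<Rightarrow> real) \<Rightarrow> real \<Rightarrow> real" where
  "rho_average \<rho> n v s = (\<Sum>i<n. \<rho> (v i / s)) / n"

lemma rho_average_continuous_on:
  assumes "rho_function \<rho>"
  shows "continuous_on {0<..} (rho_average \<rho> n v)"
  unfolding rho_average_def divide_inverse[of _ "real n"]
  by (intro continuous_intros continuous_on_compose2[OF rho_function_continuous[OF assms]]) auto

lemma rho_average_strict_antimono:
  assumes rho: "rho_function \<rho>" and ab: "0 < a" "a < b"
    and below: "rho_average \<rho> n v b < real (card {i\<in>{..<n}. v i \<noteq> 0}) / n"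
  shows "rho_average \<rho> n v b < rho_average \<rho> n v a"
proof -
  define NZ where "NZ = {i\<in>{..<n}. v i \<noteq> 0}"
  have sum_NZ: "(\<Sum>i<n. \<rho> (v i / s)) = (\<Sum>i\<in>NZ. \<rho> (v i / s))" for s
    using rho_function_zero[OF rho] by (intro sum.mono_neutral_right) (auto simp: NZ_def)
  have n: "n > 0"
    using below by (cases n) (auto simp: rho_average_def)
  have "(\<Sum>i\<in>NZ. \<rho> (v i / b)) < real (card NZ)"
    using below n by (simp add: rho_average_def sum_NZ NZ_def divide_less_cancel)
  then have "\<exists>i\<in>NZ. \<rho> (v i / b) < 1"
    using sum_bounded_below[of NZ 1 "\<lambda>i. \<rho> (v i / b)"] by (metis mult_1_right not_less)
  then obtain i where i: "i \<in> NZ" "\<rho> (v i / b) < 1" by blast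
  have "\<rho> (\<bar>v i\<bar> / b) < \<rho> (\<bar>v i\<bar> / a)"
    using i ab rho_function_even[OF rho, of "v i / b"]
    by (intro rho_function_strict_mono[OF rho] divide_strict_left_mono) (auto simp: NZ_def abs_divide)
  then have "\<rho> (v i / b) < \<rho> (v i / a)"
    using ab rho_function_even[OF rho, of "v i / b"] rho_function_even[OF rho, of "v i / a"]
    by (simp add: abs_divide)
  then have "(\<Sum>i\<in>NZ. \<rho> (v i / b)) < (\<Sum>i\<in>NZ. \<rho> (v i / a))"
    using i(1) rho_function_scale_antimono[OF rho, of a b] ab
    by (intro sum_strict_mono_ex1) (auto simp: NZ_def)
  with n show ?thesis
    unfolding rho_average_def sum_NZ by (simp add: divide_strict_right_mono)
qed

lemma rho_average_le_nonzero_fraction: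
  assumes rho: "rho_function \<rho>"
  shows "rho_average \<rho> n v s \<le> real (card {i\<in>{..<n}. v i \<noteq> 0}) / n"
proof -
  define NZ where "NZ = {i\<in>{..<n}. v i \<noteq> 0}"
  have "(\<Sum>i<n. \<rho> (v i / s)) = (\<Sum>i\<in>NZ. \<rho> (v i / s))"
    using rho_function_zero[OF rho] by (intro sum.mono_neutral_right) (auto simp: NZ_def)
  also have "\<dots> \<le> real (card NZ)"
    using sum_bounded_above[of NZ "\<lambda>i. \<rho> (v i / s)" 1] rho_function_bounds[OF rho] by simp
  finally show ?thesis
    unfolding rho_average_def NZ_def by (simp add: divide_right_mono)
qed

lemma mscale_eq_unique_root:
  assumes nondegenerate: "real n < 2 * real (card {i\<in>{..<n}. v i \<noteq> 0})"
    and root: "0 < s0" "rho_average \<rho> n v s0 = 1/2"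
    and unique: "\<And>s. 0 < s \<Longrightarrow> rho_average \<rho> n v s = 1/2 \<Longrightarrow> s = s0"
  shows "mscale \<rho> n v = s0"
proof -
  have "{..<n} = {i\<in>{..<n}. v i \<noteq> 0} \<union> {i\<in>{..<n}. v i = 0}"
    "{i\<in>{..<n}. v i \<noteq> 0} \<inter> {i\<in>{..<n}. v i = 0} = {}"
    by auto
  then have "card {i\<in>{..<n}. v i \<noteq> 0} + card {i\<in>{..<n}. v i = 0} = n"
    by (metis card_Un_disjoint card_lessThan finite_Un finite_lessThan)
  then have "\<not> real n \<le> 2 * real (card {i\<in>{..<n}. v i = 0})"
    using nondegenerate by linarith
  moreover have "s > 0 \<and> (1 / real n) * (\<Sum>i<n. \<rho> (v i / s)) = 1/2 \<longleftrightarrow> s = s0" for s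
    using root unique[of s] by (auto simp: rho_average_def)
  ultimately show ?thesis
    unfolding mscale_def by simp
qed

text \<open>The crossing of the level \<open>1/2\<close> forces more than half of the \<open>v i\<close> to be nonzero, which
  excludes the degenerate branch of \<open>mscale\<close> and makes the average strictly decreasing at the
  level, so that the root found by the intermediate value theorem is the unique one.\<close>
lemma mscale_between:
  assumes rho: "rho_function \<rho>" and s: "0 < s1" "s1 < s2"
    and above: "rho_average \<rho> n v s1 > 1/2" and below: "rho_average \<rho> n v s2 < 1/2"
  shows "s1 < mscale \<rho> n v \<and> mscale \<rho> n v < s2"
proof -
  let ?h = "rho_average \<rho> n v" and ?NZ = "{i\<in>{..<n}. v i \<noteq> 0}"
  have NZ_half: "1/2 < real (card ?NZ) / n"
    using above rho_average_le_nonzero_fraction[OF rho, of n v s1] by linarith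
  then have n: "n > 0" by (cases n) auto
  have strict: "?h b < ?h a" if "0 < a" "a < b" "?h b = 1/2" for a b
    using that(3) NZ_half by (intro rho_average_strict_antimono[OF rho that(1,2)]) linarith
  obtain s0 where s0: "s1 \<le> s0" "s0 \<le> s2" "?h s0 = 1/2"
  proof -
    have "continuous_on {s1..s2} ?h"
      using s by (intro continuous_on_subset[OF rho_average_continuous_on[OF rho]]) auto
    then show ?thesis
      using IVT2'[of ?h s2 "1/2" s1] above below s that by force
  qed
  have "s0 \<noteq> s1" "s0 \<noteq> s2"
    using s0(3) above below by auto
  with s0 have "s1 < s0" "s0 < s2"
    by linarith+
  have "mscale \<rho> n v = s0"
  proof (rule mscale_eq_unique_root)
    show "real n < 2 * real (card ?NZ)"
      using NZ_half n by (simp add: field_simps)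
    show "s = s0" if "0 < s" "?h s = 1/2" for s
      using strict[of s s0] strict[of s0 s] s0(3) that \<open>s1 < s0\<close> s(1)
      by (cases s s0 rule: linorder_cases) auto
  qed (use s0 \<open>s1 < s0\<close> s(1) in auto)
  with \<open>s1 < s0\<close> \<open>s0 < s2\<close> show ?thesis by simp
qed

lemma mscale_tendsto:
  fixes v :: "nat \<Rightarrow> nat \<Rightarrow> real" and t :: "nat \<Rightarrow> real"
  assumes rho: "rho_function \<rho>"
    and t: "\<And>m. 0 < t m" "\<And>m. t m < \<sigma>" "t \<longlonglongrightarrow> 0"
    and crossing: "\<And>m. \<forall>\<^sub>F n in sequentially.
       rho_average \<rho> n (v n) (\<sigma> - t m) > 1/2 \<and> rho_average \<rho> n (v n) (\<sigma> + t m) < 1/2"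
  shows "(\<lambda>n. mscale \<rho> n (v n)) \<longlonglongrightarrow> \<sigma>"
proof (rule tendstoI)
  fix e :: real assume "e > 0"
  then obtain m where m: "t m < e"
    using eventually_happens'[OF _ order_tendstoD(2)[OF t(3)]] by auto
  from crossing[of m] show "\<forall>\<^sub>F n in sequentially. dist (mscale \<rho> n (v n)) \<sigma> < e"
  proof eventually_elim
    case (elim n)
    then have "\<sigma> - t m < mscale \<rho> n (v n) \<and> mscale \<rho> n (v n) < \<sigma> + t m"
      using t(1,2)[of m] by (intro mscale_between[OF rho]) auto
    with m show ?case
      by (simp add: dist_real_def abs_less_iff)
  qed
qed

lemma rho_average_perturbed_tendsto:
  fixes x :: "nat \<Rightarrow> real^'p" and u :: "nat \<Rightarrow> real^'q"
    and B :: "nat \<Rightarrow> real^'q^'p" and S :: "nat \<Rightarrow> real^'q^'q"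
  assumes rho: "rho_function \<rho>" and inv: "invertible S0" and S: "S \<longlonglongrightarrow> S0" and B: "B \<longlonglongrightarrow> B0"
    and lim: "(\<lambda>n. rho_average \<rho> n (\<lambda>i. sqrt (quad_form (matrix_inv S0) (u i))) s) \<longlonglongrightarrow> g"
    and tail: "\<And>k. (\<lambda>n. (\<Sum>i<n. of_bool (real k < norm (x i, u i))) / n) \<longlonglongrightarrow> p k"
    and tail_0: "p \<longlonglongrightarrow> 0"
  shows "(\<lambda>n. rho_average \<rho> n
           (\<lambda>i. sqrt (quad_form (matrix_inv (S n)) (u i + transpose (B0 - B n) *v x i))) s) \<longlonglongrightarrow> g"
proof -
  define \<phi> where "\<phi> q = \<rho> (sqrt q / s)" for q
  define f where "f n w = \<phi> (quad_form (matrix_inv (S n)) (snd w + transpose (B0 - B n) *v fst w))" for n w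
  define f0 where "f0 w = \<phi> (quad_form (matrix_inv S0) (snd w))" for w :: "(real^'p) \<times> (real^'q)"
  have "(\<lambda>n. (\<Sum>i<n. f n (x i, u i)) / n) \<longlonglongrightarrow> g"
  proof (rule average_tendsto_of_locally_uniform[OF _ _ _ _ tail tail_0])
    show "f n w \<in> {0..1}" "f0 w \<in> {0..1}" for n w
      by (simp_all add: f_def f0_def \<phi>_def rho_function_bounds[OF rho])
    show "\<forall>\<^sub>F n in sequentially. \<forall>w. norm w \<le> K \<longrightarrow> \<bar>f n w - f0 w\<bar> < e" if "e > 0" for K e
    proof -
      obtain \<delta> where "\<delta> > 0" and \<delta>: "\<And>q q'. \<bar>q - q'\<bar> < \<delta> \<Longrightarrow> \<bar>\<phi> q - \<phi> q'\<bar> < e"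
        using rho_function_sqrt_uniformly_continuous[OF rho, of s] \<open>e > 0\<close>
        unfolding uniformly_continuous_on_def dist_real_def \<phi>_def by (metis UNIV_I)
      from quad_form_inverse_locally_uniform[OF inv S B \<open>\<delta> > 0\<close>, of K]
      show ?thesis
      proof eventually_elim
        case (elim n)
        show ?case
          using elim norm_fst_le norm_snd_le by (fastforce simp: f_def f0_def intro: \<delta> order.trans)
      qed
    qed
  qed (use lim in \<open>simp add: f0_def \<phi>_def rho_average_def\<close>)
  then show ?thesis
    by (simp add: f_def \<phi>_def rho_average_def)
qed

lemma mscale_perturbed_residuals_tendsto:
  fixes x :: "nat \<Rightarrow> real^'p" and u :: "nat \<Rightarrow> real^'q"
    and B :: "nat \<Rightarrow> real^'q^'p" and S :: "nat \<Rightarrow> real^'q^'q" and S0 :: "real^'q^'q"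
  defines "v0 \<equiv> \<lambda>i. sqrt (quad_form (matrix_inv S0) (u i))"
  assumes rho: "rho_function \<rho>" and inv: "invertible S0" and S: "S \<longlonglongrightarrow> S0" and B: "B \<longlonglongrightarrow> B0"
    and t: "\<And>m. 0 < t m" "\<And>m. t m < \<sigma>" "t \<longlonglongrightarrow> 0"
    and crossing: "\<And>m. 1/2 < g (\<sigma> - t m)" "\<And>m. g (\<sigma> + t m) < 1/2"
    and lim: "\<And>m. (\<lambda>n. rho_average \<rho> n v0 (\<sigma> - t m)) \<longlonglongrightarrow> g (\<sigma> - t m)"
      "\<And>m. (\<lambda>n. rho_average \<rho> n v0 (\<sigma> + t m)) \<longlonglongrightarrow> g (\<sigma> + t m)"
    and tail: "\<And>k. (\<lambda>n. (\<Sum>i<n. of_bool (real k < norm (x i, u i))) / n) \<longlonglongrightarrow> p k"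
    and tail_0: "p \<longlonglongrightarrow> 0"
  shows "(\<lambda>n. mscale \<rho> n
           (\<lambda>i. sqrt (quad_form (matrix_inv (S n)) (u i + transpose (B0 - B n) *v x i)))) \<longlonglongrightarrow> \<sigma>"
proof (rule mscale_tendsto[OF rho t])
  fix m
  note perturbed = rho_average_perturbed_tendsto[OF rho inv S B _ tail tail_0]
  from order_tendstoD(1)[OF perturbed[OF lim(1)[unfolded v0_def]] crossing(1)]
    order_tendstoD(2)[OF perturbed[OF lim(2)[unfolded v0_def]] crossing(2)]
  show "\<forall>\<^sub>F n in sequentially.
     1/2 < rho_average \<rho> n (\<lambda>i. sqrt (quad_form (matrix_inv (S n)) (u i + transpose (B0 - B n) *v x i))) (\<sigma> - t m) \<and>
     rho_average \<rho> n (\<lambda>i. sqrt (quad_form (matrix_inv (S n)) (u i + transpose (B0 - B n) *v x i))) (\<sigma> + t m) < 1/2"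
    by (rule eventually_conj)
qed

section \<open>Strong law of large numbers for bounded functions\<close>

text \<open>Hoeffding's inequality makes the deviation probabilities summable, so Borel--Cantelli
  gives almost sure eventual closeness.\<close>
lemma (in prob_space) iid_unit_interval_average_deviation:
  fixes Z :: "nat \<Rightarrow> 'a \<Rightarrow> real"
  assumes indep: "indep_vars (\<lambda>_. borel) Z UNIV"
    and ident: "\<And>i. distr M borel (Z i) = distr M borel (Z 0)"
    and bounded: "\<And>i x. x \<in> space M \<Longrightarrow> Z i x \<in> {0..1}"
    and "e > 0"
  shows "AE x in M. \<forall>\<^sub>F n in sequentially. \<bar>(\<Sum>i<n. Z i x) / n - expectation (Z 0)\<bar> < e"
proof -
  have [measurable]: "Z i \<in> borel_measurable M" for i
    using indep unfolding indep_vars_def by blast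
  define \<mu> where "\<mu> = expectation (Z 0)"
  define A where "A n = {x\<in>space M. \<bar>(\<Sum>i<Suc n. Z i x) / real (card {..<Suc n}) - \<mu>\<bar> \<ge> e}" for n
  have [measurable]: "A n \<in> sets M" for n
    unfolding A_def by measurable
  have bound: "prob (A n) \<le> 2 * exp (-2 * e\<^sup>2) * exp (-2 * e\<^sup>2) ^ n" for n
  proof -
    interpret Hoeffding_ineq_iid M "{..<Suc n}" Z "Z 0" 0 1 \<mu>
      by unfold_locales (use indep_vars_subset[OF indep] ident bounded in \<open>auto simp: \<mu>_def\<close>)
    have "prob (A n) \<le> 2 * exp (-2 * real (card {..<Suc n}) * e\<^sup>2 / (1 - 0)\<^sup>2)"
      using Hoeffding_ineq_abs_ge'[of e] \<open>e > 0\<close> unfolding A_def by auto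
    also have "\<dots> = 2 * exp (-2 * e\<^sup>2) * exp (-2 * e\<^sup>2) ^ n"
      by (simp add: exp_of_nat_mult[symmetric] exp_add[symmetric] algebra_simps)
    finally show ?thesis .
  qed
  have "summable (\<lambda>n. 2 * exp (-2 * e\<^sup>2) * exp (-2 * e\<^sup>2) ^ n)"
    using \<open>e > 0\<close> by (intro summable_mult summable_geometric) auto
  then have "summable (\<lambda>n. prob (A n))"
    by (rule summable_comparison_test[rotated]) (use bound in auto)
  then have "AE x in M. \<forall>\<^sub>F n in sequentially. x \<in> space M - A n"
    by (intro borel_cantelli_AE1) (auto simp: emeasure_eq_measure)
  then show ?thesis
  proof (rule AE_mp, intro AE_I2 impI)
    fix x assume "x \<in> space M" "\<forall>\<^sub>F n in sequentially. x \<in> space M - A n"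
    then have "\<forall>\<^sub>F n in sequentially. \<bar>(\<Sum>i<Suc n. Z i x) / real (Suc n) - \<mu>\<bar> < e"
      by (auto simp: A_def elim!: eventually_mono)
    then show "\<forall>\<^sub>F n in sequentially. \<bar>(\<Sum>i<n. Z i x) / n - expectation (Z 0)\<bar> < e"
      unfolding \<mu>_def by (subst eventually_sequentially_Suc[symmetric])
  qed
qed

lemma (in prob_space) iid_unit_interval_average_tendsto:
  fixes Z :: "nat \<Rightarrow> 'a \<Rightarrow> real"
  assumes indep: "indep_vars (\<lambda>_. borel) Z UNIV"
    and ident: "\<And>i. distr M borel (Z i) = distr M borel (Z 0)"
    and bounded: "\<And>i x. x \<in> space M \<Longrightarrow> Z i x \<in> {0..1}"
  shows "AE x in M. (\<lambda>n. (\<Sum>i<n. Z i x) / n) \<longlonglongrightarrow> expectation (Z 0)"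
proof -
  have "AE x in M. \<forall>k. \<forall>\<^sub>F n in sequentially.
      \<bar>(\<Sum>i<n. Z i x) / n - expectation (Z 0)\<bar> < inverse (real (Suc k))"
    unfolding AE_all_countable by (intro allI iid_unit_interval_average_deviation[OF assms]) auto
  then show ?thesis
  proof (rule AE_mp, intro AE_I2 impI)
    fix x assume H: "\<forall>k. \<forall>\<^sub>F n in sequentially.
      \<bar>(\<Sum>i<n. Z i x) / n - expectation (Z 0)\<bar> < inverse (real (Suc k))"
    show "(\<lambda>n. (\<Sum>i<n. Z i x) / n) \<longlonglongrightarrow> expectation (Z 0)"
    proof (rule tendstoI)
      fix r :: real assume "r > 0"
      then obtain k where "inverse (real (Suc k)) < r"
        using reals_Archimedean by blast
      with H[rule_format, of k]
      show "\<forall>\<^sub>F n in sequentially. dist ((\<Sum>i<n. Z i x) / n) (expectation (Z 0)) < r"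
        by (auto simp: dist_real_def elim!: eventually_mono)
    qed
  qed
qed

lemma (in prob_space) iid_average_tendsto_expectation:
  fixes W :: "nat \<Rightarrow> 'a \<Rightarrow> 'b" and h :: "'b \<Rightarrow> real"
  assumes indep: "indep_vars (\<lambda>_. N) W UNIV"
    and ident: "\<And>i. distr M N (W i) = distr M N (W 0)"
    and h: "h \<in> borel_measurable N" "\<And>z. h z \<in> {0..1}"
  shows "AE x in M. (\<lambda>n. (\<Sum>i<n. h (W i x)) / n) \<longlonglongrightarrow> expectation (\<lambda>x. h (W 0 x))"
proof (rule iid_unit_interval_average_tendsto)
  show "indep_vars (\<lambda>_. borel) (\<lambda>i x. h (W i x)) UNIV"
    by (rule indep_vars_compose2[OF indep]) (use h in simp)
  have [measurable]: "W i \<in> measurable M N" for i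
    using indep unfolding indep_vars_def by blast
  show "distr M borel (\<lambda>x. h (W i x)) = distr M borel (\<lambda>x. h (W 0 x))" for i
    using distr_distr[of h N borel "W i" M] distr_distr[of h N borel "W 0" M] ident[of i] h(1)
    by (simp add: comp_def)
qed (use h in auto)

lemma tail_integral_tendsto_0:
  fixes N :: "'b::real_normed_vector measure"
  assumes "finite_measure N" and "sets N = sets borel"
  shows "(\<lambda>k. \<integral>w. of_bool (real k < norm w) \<partial>N) \<longlonglongrightarrow> (0 :: real)"
proof -
  interpret finite_measure N by fact
  have [measurable]: "(\<lambda>w. of_bool (real k < norm w) :: real) \<in> borel_measurable N" for k
    using assms(2) by (simp add: measurable_cong_sets[OF assms(2) refl])
  have "(\<lambda>k. \<integral>w. of_bool (real k < norm w) \<partial>N) \<longlonglongrightarrow> (\<integral>w. 0 \<partial>N :: real)"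
  proof (rule integral_dominated_convergence[where w = "\<lambda>_. 1"])
    show "AE w in N. (\<lambda>k. of_bool (real k < norm w) :: real) \<longlonglongrightarrow> 0" for w
    proof (intro AE_I2 tendsto_eventually)
      fix w :: 'b
      obtain k0 :: nat where "norm w < real k0"
        using reals_Archimedean2 by blast
      then show "\<forall>\<^sub>F k in sequentially. (of_bool (real k < norm w) :: real) = 0"
        unfolding eventually_sequentially by (auto intro!: exI[of _ k0])
    qed
  qed auto
  then show ?thesis by simp
qed

lemma (in prob_space) iid_tail_frequency_tendsto:
  fixes W :: "nat \<Rightarrow> 'a \<Rightarrow> 'b::{real_normed_vector, second_countable_topology}"
  assumes indep: "indep_vars (\<lambda>_. borel) W UNIV"
    and ident: "\<And>i. distr M borel (W i) = distr M borel (W 0)"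
  obtains p where "p \<longlonglongrightarrow> 0"
    and "AE x in M. \<forall>k. (\<lambda>n. (\<Sum>i<n. of_bool (real k < norm (W i x))) / n) \<longlonglongrightarrow> p k"
proof
  have [measurable]: "W 0 \<in> borel_measurable M"
    using indep unfolding indep_vars_def by blast
  define p :: "nat \<Rightarrow> real" where "p k = (\<integral>w. of_bool (real k < norm w) \<partial>distr M borel (W 0))" for k
  show "p \<longlonglongrightarrow> 0"
    unfolding p_def using prob_space_distr[of "W 0" borel]
    by (intro tail_integral_tendsto_0 prob_space.finite_measure) auto
  have "AE x in M. (\<lambda>n. (\<Sum>i<n. of_bool (real k < norm (W i x))) / n) \<longlonglongrightarrow> p k" for k
    using iid_average_tendsto_expectation[OF indep ident, of "\<lambda>w. of_bool (real k < norm w)"]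
      integral_distr[of "W 0" M borel "\<lambda>w. of_bool (real k < norm w) :: real"]
    by (simp add: p_def)
  then show "AE x in M. \<forall>k. (\<lambda>n. (\<Sum>i<n. of_bool (real k < norm (W i x))) / n) \<longlonglongrightarrow> p k"
    by (simp add: AE_all_countable)
qed

lemma (in prob_space) iid_rho_average_tendsto:
  fixes X :: "nat \<Rightarrow> 'a \<Rightarrow> 'b::topological_space" and U :: "nat \<Rightarrow> 'a \<Rightarrow> 'c::topological_space"
  assumes indep: "indep_vars (\<lambda>_. borel) (\<lambda>i x. (X i x, U i x)) UNIV"
    and ident: "\<And>i. distr M borel (\<lambda>x. (X i x, U i x)) = distr M borel (\<lambda>x. (X 0 x, U 0 x))"
    and F: "distr M borel (U 0) = F" and rho: "rho_function \<rho>" and f: "f \<in> borel_measurable borel"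
  shows "AE x in M. (\<lambda>n. rho_average \<rho> n (\<lambda>i. f (U i x)) s) \<longlonglongrightarrow> (\<integral>u. \<rho> (f u / s) \<partial>F)"
proof -
  have "(\<lambda>x. (X 0 x, U 0 x)) \<in> borel_measurable M"
    using indep unfolding indep_vars_def by blast
  then have [measurable]: "U 0 \<in> borel_measurable M"
    using measurable_compose[of _ M borel snd borel] borel_measurable_continuous_onI[OF continuous_on_snd[OF continuous_on_id]]
    by fastforce
  have [measurable]: "(\<lambda>u. \<rho> (f u / s)) \<in> borel_measurable borel"
    using borel_measurable_continuous_onI[OF rho_function_continuous[OF rho]] f by measurable
  have "expectation (\<lambda>x. \<rho> (f (U 0 x) / s)) = (\<integral>u. \<rho> (f u / s) \<partial>F)"
    unfolding F[symmetric] by (rule integral_distr[symmetric]) auto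
  moreover have "(\<lambda>w. \<rho> (f (snd w) / s)) \<in> borel_measurable borel"
    by (intro measurable_compose[OF _ \<open>(\<lambda>u. \<rho> (f u / s)) \<in> borel_measurable borel\<close>]
        borel_measurable_continuous_onI continuous_intros)
  ultimately show ?thesis
    using iid_average_tendsto_expectation[OF indep ident, of "\<lambda>w. \<rho> (f (snd w) / s)"]
      rho_function_bounds[OF rho]
    by (simp add: rho_average_def)
qed

section \<open>The population scale\<close>

lemma antimono_unique_level_crossing:
  fixes g :: "real \<Rightarrow> real"
  assumes antimono: "\<And>a b. 0 < a \<Longrightarrow> a \<le> b \<Longrightarrow> g b \<le> g a"
    and level: "g \<sigma> = c" and unique: "\<And>s. 0 < s \<Longrightarrow> g s = c \<Longrightarrow> s = \<sigma>"
    and t: "0 < t" "t < \<sigma>"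
  shows "c < g (\<sigma> - t)" "g (\<sigma> + t) < c"
proof -
  have "c \<le> g (\<sigma> - t)" "g (\<sigma> + t) \<le> c"
    using antimono[of "\<sigma> - t" \<sigma>] antimono[of \<sigma> "\<sigma> + t"] level t by auto
  moreover have "g (\<sigma> - t) \<noteq> c" "g (\<sigma> + t) \<noteq> c"
    using unique[of "\<sigma> - t"] unique[of "\<sigma> + t"] t by auto
  ultimately show "c < g (\<sigma> - t)" "g (\<sigma> + t) < c"
    by auto
qed

lemma rho_integral_antimono:
  assumes "finite_measure F" and "sets F = sets borel" and rho: "rho_function \<rho>"
    and f: "f \<in> borel_measurable borel" and "0 < a" "a \<le> b"
  shows "(\<integral>u. \<rho> (f u / b) \<partial>F) \<le> (\<integral>u. \<rho> (f u / a) \<partial>F)"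
proof -
  interpret finite_measure F by fact
  have "integrable F (\<lambda>u. \<rho> (f u / s))" for s
  proof (rule integrable_const_bound[where B = 1])
    have "(\<lambda>u. \<rho> (f u / s)) \<in> borel_measurable borel"
      using borel_measurable_continuous_onI[OF rho_function_continuous[OF rho]] f by measurable
    then show "(\<lambda>u. \<rho> (f u / s)) \<in> borel_measurable F"
      by (simp add: measurable_cong_sets[OF assms(2) refl])
  qed (use rho_function_bounds[OF rho] in auto)
  then show ?thesis
    using assms(5,6) by (intro integral_mono rho_function_scale_antimono[OF rho])
qed

lemma rho_integral_level_crossing:
  assumes F: "finite_measure F" "sets F = sets borel" and rho: "rho_function \<rho>"
    and f: "f \<in> borel_measurable borel"
    and level: "(\<integral>u. \<rho> (f u / \<sigma>) \<partial>F) = c"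
    and unique: "\<And>s. 0 < s \<Longrightarrow> (\<integral>u. \<rho> (f u / s) \<partial>F) = c \<Longrightarrow> s = \<sigma>"
    and t: "0 < t" "t < \<sigma>"
  shows "c < (\<integral>u. \<rho> (f u / (\<sigma> - t)) \<partial>F)" "(\<integral>u. \<rho> (f u / (\<sigma> + t)) \<partial>F) < c"
proof -
  have antimono: "(\<integral>u. \<rho> (f u / b) \<partial>F) \<le> (\<integral>u. \<rho> (f u / a) \<partial>F)" if "0 < a" "a \<le> b" for a b
    using rho_integral_antimono[OF F rho f that] .
  show "c < (\<integral>u. \<rho> (f u / (\<sigma> - t)) \<partial>F)"
    using antimono level unique t by (rule antimono_unique_level_crossing(1))
  show "(\<integral>u. \<rho> (f u / (\<sigma> + t)) \<partial>F) < c"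
    using antimono level unique t by (rule antimono_unique_level_crossing(2))
qed

lemma obtain_null_sequence_below:
  assumes "0 < (\<sigma> :: real)"
  obtains t :: "nat \<Rightarrow> real" where "\<And>m. 0 < t m" "\<And>m. t m < \<sigma>" "t \<longlonglongrightarrow> 0"
proof
  define t where "t m = \<sigma> / 2 * inverse (real (Suc m))" for m
  have half: "t m \<le> \<sigma> / 2" for m
    unfolding t_def using assms by (intro mult_left_le) (auto simp: inverse_le_1_iff)
  show "0 < t m" "t m < \<sigma>" for m
    using half[of m] assms by (auto simp: t_def)
  show "t \<longlonglongrightarrow> 0"
    unfolding t_def by (intro tendsto_mult_right_zero LIMSEQ_inverse_real_of_nat)
qed

theorem lemma6:
  fixes M :: "'a measure"
    and X :: "nat \<Rightarrow> 'a \<Rightarrow> real^'p"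
    and U :: "nat \<Rightarrow> 'a \<Rightarrow> real^'q"
    and Y :: "nat \<Rightarrow> 'a \<Rightarrow> real^'q"
    and B0 :: "real^'q^'p"
    and \<Sigma>0 \<Gamma>0 :: "real^'q^'q"
    and F0 :: "(real^'q) measure"
    and \<rho>0 :: "real \<Rightarrow> real"
    and Bt :: "nat \<Rightarrow> 'a \<Rightarrow> real^'q^'p"
    and St :: "nat \<Rightarrow> 'a \<Rightarrow> real^'q^'q"
    and \<sigma>0 :: real
  assumes "prob_space M"
    and rv_X: "\<And>i. X i \<in> borel_measurable M"
    and rv_U: "\<And>i. U i \<in> borel_measurable M"
    and iid_indep: "prob_space.indep_vars M (\<lambda>_. borel) (\<lambda>i \<omega>. (X i \<omega>, U i \<omega>)) UNIV"
    and iid_dist: "\<And>i. distr M borel (\<lambda>\<omega>. (X i \<omega>, U i \<omega>)) = distr M borel (\<lambda>\<omega>. (X 0 \<omega>, U 0 \<omega>))"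
    and indep_XU: "\<And>i. distr M borel (\<lambda>\<omega>. (X i \<omega>, U i \<omega>)) = distr M borel (X i) \<Otimes>\<^sub>M distr M borel (U i)"
    and model: "\<And>i \<omega>. \<omega> \<in> space M \<Longrightarrow> Y i \<omega> = transpose B0 *v X i \<omega> + U i \<omega>"
    and F0: "\<And>i. distr M borel (U i) = F0"
    and scatter: "pd_sym \<Sigma>0"
    and Gamma0: "\<Gamma>0 = (1 / (det \<Sigma>0 powr (1 / real CARD('q)))) *\<^sub>R \<Sigma>0"
    and rho: "rho_function \<rho>0"
    and init_B: "AE \<omega> in M. (\<lambda>n. Bt n \<omega>) \<longlonglongrightarrow> B0"
    and init_S: "AE \<omega> in M. (\<lambda>n. St n \<omega>) \<longlonglongrightarrow> \<Gamma>0"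
    and sigma0_pos: "\<sigma>0 > 0"
    and sigma0_eq: "(\<integral>u. \<rho>0 (sqrt (u \<bullet> (matrix_inv \<Gamma>0 *v u)) / \<sigma>0) \<partial>F0) = 1/2"
    and sigma0_unique: "\<And>\<sigma>. \<sigma> > 0 \<Longrightarrow>
           (\<integral>u. \<rho>0 (sqrt (u \<bullet> (matrix_inv \<Gamma>0 *v u)) / \<sigma>) \<partial>F0) = 1/2 \<Longrightarrow> \<sigma> = \<sigma>0"
  shows "AE \<omega> in M.
           (\<lambda>n. mscale \<rho>0 n (\<lambda>i. mdist (Bt n \<omega>) (St n \<omega>) (Y i \<omega>) (X i \<omega>))) \<longlonglongrightarrow> \<sigma>0"
proof -
  interpret prob_space M by fact
  define d where "d u = sqrt (quad_form (matrix_inv \<Gamma>0) u)" for u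
  define g where "g s = (\<integral>u. \<rho>0 (d u / s) \<partial>F0)" for s
  have inv: "invertible \<Gamma>0"
    unfolding Gamma0 by (rule pd_sym_scaled_invertible[OF scatter])
  have d_measurable: "d \<in> borel_measurable borel"
    unfolding d_def quad_form_def by (intro borel_measurable_continuous_onI continuous_intros)
  obtain t where t: "\<And>m. 0 < t m" "\<And>m. t m < \<sigma>0" and "t \<longlonglongrightarrow> 0"
    using obtain_null_sequence_below[OF sigma0_pos] by blast
  have F0_finite: "finite_measure F0" and F0_sets: "sets F0 = sets borel"
    using F0[of 0] prob_space_distr[OF rv_U, of 0] by (auto intro: prob_space.finite_measure)
  have level: "(\<integral>u. \<rho>0 (d u / \<sigma>0) \<partial>F0) = 1/2"
    using sigma0_eq by (simp add: d_def quad_form_def)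
  have unique: "\<And>s. 0 < s \<Longrightarrow> (\<integral>u. \<rho>0 (d u / s) \<partial>F0) = 1/2 \<Longrightarrow> s = \<sigma>0"
    using sigma0_unique by (simp add: d_def quad_form_def)
  note crossing =
    rho_integral_level_crossing[OF F0_finite F0_sets rho d_measurable level unique t, folded g_def]
  obtain p where "p \<longlonglongrightarrow> 0"
    and tail: "AE \<omega> in M. \<forall>k.
      (\<lambda>n. (\<Sum>i<n. of_bool (real k < norm (X i \<omega>, U i \<omega>))) / n) \<longlonglongrightarrow> p k"
    using iid_tail_frequency_tendsto[OF iid_indep iid_dist] by blast
  note lim = iid_rho_average_tendsto[OF iid_indep iid_dist F0[of 0] rho d_measurable, folded g_def]
  have "AE \<omega> in M. \<forall>m. (\<lambda>n. rho_average \<rho>0 n (\<lambda>i. d (U i \<omega>)) (\<sigma>0 - t m)) \<longlonglongrightarrow> g (\<sigma>0 - t m)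
                     \<and> (\<lambda>n. rho_average \<rho>0 n (\<lambda>i. d (U i \<omega>)) (\<sigma>0 + t m)) \<longlonglongrightarrow> g (\<sigma>0 + t m)"
    unfolding AE_all_countable by (intro allI AE_conjI lim)
  with tail init_B init_S AE_space show ?thesis
  proof eventually_elim
    case (elim \<omega>)
    then have
      "(\<lambda>n. rho_average \<rho>0 n (\<lambda>i. sqrt (quad_form (matrix_inv \<Gamma>0) (U i \<omega>))) (\<sigma>0 - t m))
         \<longlonglongrightarrow> g (\<sigma>0 - t m)"
      "(\<lambda>n. rho_average \<rho>0 n (\<lambda>i. sqrt (quad_form (matrix_inv \<Gamma>0) (U i \<omega>))) (\<sigma>0 + t m))
         \<longlonglongrightarrow> g (\<sigma>0 + t m)"
      for m
      unfolding d_def by blast+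
    from mscale_perturbed_residuals_tendsto[OF rho inv elim(3,2) t \<open>t \<longlonglongrightarrow> 0\<close> crossing this
        elim(1)[rule_format] \<open>p \<longlonglongrightarrow> 0\<close>]
    show ?case
      unfolding model[OF elim(4)] mdist_linear_model .
  qed
qed

end
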